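(* Let $\rho>1$ and let $\mathbf{p}=(p_1,\ldots,p_n)$ be a probability distribution with $p_1\geq p_2\geq\cdots\geq p_n>0$ and $p_1/p_n\leq\rho$. Then $$H(\mathbf{p})\geq \log_2 n-\left(\frac{\rho\ln\rho}{\rho-1}-1-\ln\frac{\rho\ln\rho}{\rho-1}\right)\frac{1}{\ln 2}.$$
   Context: $H(\mathbf{p})=-\sum_i p_i\log_2 p_i$ is the Shannon entropy in bits, and $\ln$ is the natural logarithm. *)

theory Defs
  imports Complex_Main
begin

definition shannon_entropy :: "nat \<Rightarrow> (nat \<Rightarrow> real) \<Rightarrow> real" where
  "shannon_entropy n p = - (\<Sum>i=1..n. p i * log 2 (p i))"

end

theory Submission
  imports Defs "HOL-Analysis.Convex"
begin

text \<open>
  Write \<open>c = \<rho> ln \<rho> / (\<rho> - 1)\<close> and \<open>m = p\<^sub>n\<close>. Every ratio \<open>t = p\<^sub>i / m\<close> lies in \<open>[1, \<rho>]\<close>,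
  where the convex function \<open>t ln t\<close> stays below its chord \<open>(t - 1) c\<close>. Summing gives
  \<open>\<Sum> p\<^sub>i ln (n p\<^sub>i) \<le> ln (n m) + (1 - n m) c\<close>, and maximising the right-hand side over \<open>n m > 0\<close>
  (equivalently, \<open>ln x \<le> x - 1\<close> at \<open>x = n m c\<close>) bounds it by \<open>c - 1 - ln c\<close>. The left-hand side is
  \<open>ln n - H(p) ln 2\<close>.
\<close>

lemma convex_on_x_ln_x: "convex_on {0<..} (\<lambda>x::real. x * ln x)"
proof (rule convex_on_realI[where f' = "\<lambda>x. ln x + 1"])
  fix x :: real
  assume "x \<in> {0<..}"
  then show "((\<lambda>x. x * ln x) has_real_derivative ln x + 1) (at x)"
    by (auto intro!: derivative_eq_intros)
qed (auto simp: connected_Ioi)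

lemma x_ln_x_le_chord:
  fixes \<rho> t :: real
  assumes "\<rho> > 1" "1 \<le> t" "t \<le> \<rho>"
  shows "t * ln t \<le> (t - 1) * (\<rho> * ln \<rho> / (\<rho> - 1))"
proof -
  define l where "l = (t - 1) / (\<rho> - 1)"
  have l: "0 \<le> l" "l \<le> 1"
    using assms by (auto simp: l_def field_simps)
  have "l * (\<rho> - 1) = t - 1"
    using assms by (simp add: l_def)
  then have t_eq: "(1 - l) *\<^sub>R 1 + l *\<^sub>R \<rho> = t"
    by (simp add: algebra_simps)
  have "t * ln t \<le> (1 - l) * (1 * ln 1) + l * (\<rho> * ln \<rho>)"
    using convex_onD[OF convex_on_x_ln_x, of l 1 \<rho>] l assms unfolding t_eq by auto
  then show ?thesis
    by (simp add: l_def)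
qed

lemma x_ln_scaled_le_chord:
  fixes \<rho> k m x :: real
  assumes "\<rho> > 1" "k > 0" "m > 0" "m \<le> x" "x \<le> \<rho> * m"
  shows "x * ln (k * x) \<le> x * ln (k * m) + (x - m) * (\<rho> * ln \<rho> / (\<rho> - 1))"
proof -
  define t where "t = x / m"
  have x_eq: "x = m * t"
    using assms by (simp add: t_def)
  have "1 \<le> t" "t \<le> \<rho>"
    using assms by (auto simp: t_def field_simps)
  then have "m * (t * ln t) \<le> m * ((t - 1) * (\<rho> * ln \<rho> / (\<rho> - 1)))"
    using x_ln_x_le_chord[OF \<open>\<rho> > 1\<close>] \<open>m > 0\<close> by (intro mult_left_mono) auto
  moreover have "ln (k * x) = ln (k * m) + ln t"
    using assms by (simp add: t_def ln_mult ln_div)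
  ultimately show ?thesis
    by (simp add: x_eq algebra_simps)
qed

lemma sum_x_ln_card_x_le:
  fixes \<rho> m :: real and p :: "'a \<Rightarrow> real"
  assumes "\<rho> > 1" "finite A" "sum p A = 1" "m > 0"
    and bounds: "\<And>i. i \<in> A \<Longrightarrow> m \<le> p i \<and> p i \<le> \<rho> * m"
  defines "c \<equiv> \<rho> * ln \<rho> / (\<rho> - 1)"
  shows "(\<Sum>i\<in>A. p i * ln (card A * p i)) \<le> c - 1 - ln c"
proof -
  define n where "n = real (card A)"
  have "A \<noteq> {}"
    using \<open>sum p A = 1\<close> by auto
  then have "n > 0"
    using \<open>finite A\<close> by (simp add: n_def card_gt_0_iff)
  have "c > 0"
    using \<open>\<rho> > 1\<close> by (simp add: c_def)
  have "(\<Sum>i\<in>A. p i * ln (n * p i)) \<le> (\<Sum>i\<in>A. p i * ln (n * m) + (p i - m) * c)"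
    using x_ln_scaled_le_chord[OF \<open>\<rho> > 1\<close> \<open>n > 0\<close> \<open>m > 0\<close>] bounds
    unfolding c_def by (intro sum_mono) blast
  also have "\<dots> = ln (n * m) + (1 - n * m) * c"
    using \<open>sum p A = 1\<close>
    by (simp add: n_def sum.distrib sum_subtractf algebra_simps
        flip: sum_distrib_right sum_distrib_left)
  also have "\<dots> \<le> c - 1 - ln c"
  proof -
    have "ln (n * m * c) \<le> n * m * c - 1"
      using \<open>n > 0\<close> \<open>m > 0\<close> \<open>c > 0\<close> by (intro ln_le_minus_one) simp
    moreover have "ln (n * m * c) = ln (n * m) + ln c"
      using \<open>n > 0\<close> \<open>m > 0\<close> \<open>c > 0\<close> by (simp add: ln_mult)
    ultimately show ?thesis
      by (simp add: algebra_simps)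
  qed
  finally show ?thesis
    by (simp add: n_def)
qed

lemma sum_x_ln_card_x_eq:
  fixes p :: "'a \<Rightarrow> real"
  assumes "finite A" "sum p A = 1" "\<And>i. i \<in> A \<Longrightarrow> p i > 0"
  shows "(\<Sum>i\<in>A. p i * ln (card A * p i)) = ln (card A) + (\<Sum>i\<in>A. p i * ln (p i))"
proof -
  have "card A > 0"
    using assms(1,2) by (auto simp: card_gt_0_iff)
  then have "(\<Sum>i\<in>A. p i * ln (card A * p i)) = (\<Sum>i\<in>A. p i * ln (card A) + p i * ln (p i))"
    using assms(3) by (intro sum.cong) (auto simp: ln_mult algebra_simps)
  also have "\<dots> = ln (card A) + (\<Sum>i\<in>A. p i * ln (p i))"
    using assms(2) by (simp add: sum.distrib flip: sum_distrib_right)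
  finally show ?thesis .
qed

lemma shannon_entropy_eq_ln:
  "shannon_entropy n p = - (\<Sum>i=1..n. p i * ln (p i)) / ln 2"
  unfolding shannon_entropy_def log_def by (simp add: sum_divide_distrib)

theorem theorem2:
  fixes \<rho> :: real and n :: nat and p :: "nat \<Rightarrow> real"
  assumes "\<rho> > 1"
    and "n \<ge> 1"
    and "(\<Sum>i=1..n. p i) = 1"
    and "\<And>i j. 1 \<le> i \<Longrightarrow> i \<le> j \<Longrightarrow> j \<le> n \<Longrightarrow> p j \<le> p i"
    and "p n > 0"
    and "p 1 / p n \<le> \<rho>"
  shows "shannon_entropy n p \<ge> log 2 n
    - ((\<rho> * ln \<rho> / (\<rho> - 1)) - 1 - ln (\<rho> * ln \<rho> / (\<rho> - 1))) * (1 / ln 2)"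
proof -
  define c where "c = \<rho> * ln \<rho> / (\<rho> - 1)"
  have "p 1 \<le> \<rho> * p n"
    using assms(5,6) by (simp add: field_simps)
  then have bounds: "p n \<le> p i \<and> p i \<le> \<rho> * p n" if "i \<in> {1..n}" for i
    using assms(4)[of i n] assms(4)[of 1 i] that by auto
  have "ln n + (\<Sum>i=1..n. p i * ln (p i)) \<le> c - 1 - ln c"
    using sum_x_ln_card_x_le[OF assms(1) _ assms(3,5) bounds]
      sum_x_ln_card_x_eq[of "{1..n}" p] bounds assms(3,5)
    by (fastforce simp: c_def)
  then have "(ln n - (c - 1 - ln c)) / ln 2 \<le> - (\<Sum>i=1..n. p i * ln (p i)) / ln 2"
    by (intro divide_right_mono) auto
  then show ?thesis
    by (simp add: shannon_entropy_eq_ln log_def c_def diff_divide_distrib)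
qed

end
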